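(* Let $\Omega$ be a topological Hausdorff space, $\mathcal{FV}(\Omega)$ a dom-space and $T\colon\mathcal{FV}(\Omega)\to\mathcal{C}(\Omega)$ linear. Then the map $\delta\circ T\colon\Omega\to\mathcal{FV}(\Omega)'_\gamma$, $x\mapsto\delta_x\circ T$, is well-defined and continuous in each of the following cases: (i) $\Omega$ is a $k_{\mathbb{R}}$-space and $T\colon\mathcal{FV}(\Omega)\to\mathcal{CW}(\Omega)$ is continuous; (ii) $T$ maps into $\mathcal{C}_b(\Omega)$ and $T\colon\mathcal{FV}(\Omega)\to\mathcal{C}_b(\Omega)$ is continuous.
   Context: $\mathbb{K}\in\{\mathbb{R},\mathbb{C}\}$. $\mathcal{CW}(\Omega)$: continuous $\mathbb{K}$-valued functions with the topology of uniform convergence on compact subsets; $\mathcal{C}_b(\Omega)$: bounded continuous $\mathbb{K}$-valued functions with the topology of uniform convergence on $\Omega$. A completely regular space $\Omega$ is a $k_{\mathbb{R}}$-space if every map from $\Omega$ into a completely regular space whose restriction to each compact subset is continuous is continuous. $\mathcal{FV}(\Omega)'_\gamma$: dual with the topology of uniform convergence on precompact subsets. $(\delta_x\circ T)(f):=T(f)(x)$. Framework: $J,M$ non-empty index sets, $(\omega_m)_{m\in M}$ non-empty sets, $\nu_{j,m}\colon\omega_m\to[0,\infty)$ such that for all $m$, $x\in\omega_m$ some $\nu_{j,m}(x)>0$; $\operatorname{AP}(\Omega)\subset\mathbb{K}^\Omega$ a linear subspace; $T_m\colon\operatorname{dom}T_m\to\mathbb{K}^{\omega_m}$ linear maps on linear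 subspaces of $\mathbb{K}^\Omega$; $\mathcal{FV}(\Omega):=\{f\in\operatorname{AP}(\Omega)\cap\bigcap_m\operatorname{dom}T_m: |f|_{j,m}:=\sup_{x\in\omega_m}|T_m(f)(x)|\nu_{j,m}(x)<\infty\ \forall j,m\}$ with these seminorms. It is a dom-space if it is Hausdorff, the seminorms are directed and every $\delta_x\colon f\mapsto f(x)$ belongs to $\mathcal{FV}(\Omega)'$. *)

theory Defs
  imports "HOL-Analysis.Analysis"
begin

text \<open>Functions on Omega are modelled as functions of type 'a to 'k; only their
values on the carrier of the topology matter for the statement.\<close>

definition lin_subspace :: "('a \<Rightarrow> 'k::real_normed_field) set \<Rightarrow> bool" where
  "lin_subspace S \<longleftrightarrow> (\<lambda>x. 0) \<in> S \<and>
     (\<forall>f\<in>S. \<forall>g\<in>S. (\<lambda>x. f x + g x) \<in> S) \<and> (\<forall>c. \<forall>f\<in>S. (\<lambda>x. c * f x) \<in> S)"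

definition lin_map_on :: "('a \<Rightarrow> 'k::real_normed_field) set \<Rightarrow> (('a \<Rightarrow> 'k) \<Rightarrow> ('b \<Rightarrow> 'k)) \<Rightarrow> bool" where
  "lin_map_on D T \<longleftrightarrow> (\<forall>f\<in>D. \<forall>g\<in>D. T (\<lambda>x. f x + g x) = (\<lambda>y. T f y + T g y)) \<and>
     (\<forall>c. \<forall>f\<in>D. T (\<lambda>x. c * f x) = (\<lambda>y. c * T f y))"

definition lin_map_into_on :: "('a \<Rightarrow> 'k::real_normed_field) set \<Rightarrow> 'b set \<Rightarrow> (('a \<Rightarrow> 'k) \<Rightarrow> ('b \<Rightarrow> 'k)) \<Rightarrow> bool" where
  "lin_map_into_on D S T \<longleftrightarrow> (\<forall>f\<in>D. \<forall>g\<in>D. \<forall>y\<in>S. T (\<lambda>x. f x + g x) y = T f y + T g y) \<and>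
     (\<forall>c. \<forall>f\<in>D. \<forall>y\<in>S. T (\<lambda>x. c * f x) y = c * T f y)"

definition lin_functional_on :: "('a \<Rightarrow> 'k::real_normed_field) set \<Rightarrow> (('a \<Rightarrow> 'k) \<Rightarrow> 'k) \<Rightarrow> bool" where
  "lin_functional_on D \<phi> \<longleftrightarrow> (\<forall>f\<in>D. \<forall>g\<in>D. \<phi> (\<lambda>x. f x + g x) = \<phi> f + \<phi> g) \<and>
     (\<forall>c. \<forall>f\<in>D. \<phi> (\<lambda>x. c * f x) = c * \<phi> f)"

definition fv_seminorm ::
  "('m \<Rightarrow> ('a \<Rightarrow> 'k::real_normed_field) \<Rightarrow> ('w \<Rightarrow> 'k)) \<Rightarrow> ('m \<Rightarrow> 'w set) \<Rightarrow> ('j \<Rightarrow> 'm \<Rightarrow> 'w \<Rightarrow> real)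
    \<Rightarrow> 'j \<Rightarrow> 'm \<Rightarrow> ('a \<Rightarrow> 'k) \<Rightarrow> real" where
  "fv_seminorm Tm \<omega> \<nu> j m f = (SUP x\<in>\<omega> m. norm (Tm m f x) * \<nu> j m x)"

definition FV_space ::
  "('a \<Rightarrow> 'k::real_normed_field) set \<Rightarrow> ('m \<Rightarrow> ('a \<Rightarrow> 'k) set) \<Rightarrow> ('m \<Rightarrow> ('a \<Rightarrow> 'k) \<Rightarrow> ('w \<Rightarrow> 'k))
    \<Rightarrow> ('m \<Rightarrow> 'w set) \<Rightarrow> ('j \<Rightarrow> 'm \<Rightarrow> 'w \<Rightarrow> real) \<Rightarrow> ('a \<Rightarrow> 'k) set" where
  "FV_space AP domT Tm \<omega> \<nu> = {f \<in> AP. (\<forall>m. f \<in> domT m) \<and>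
       (\<forall>j m. bdd_above ((\<lambda>x. norm (Tm m f x) * \<nu> j m x) ` \<omega> m))}"

definition FV_topology ::
  "('a \<Rightarrow> 'k::real_normed_field) set \<Rightarrow> ('m \<Rightarrow> ('a \<Rightarrow> 'k) set) \<Rightarrow> ('m \<Rightarrow> ('a \<Rightarrow> 'k) \<Rightarrow> ('w \<Rightarrow> 'k))
    \<Rightarrow> ('m \<Rightarrow> 'w set) \<Rightarrow> ('j \<Rightarrow> 'm \<Rightarrow> 'w \<Rightarrow> real) \<Rightarrow> ('a \<Rightarrow> 'k) topology" where
  "FV_topology AP domT Tm \<omega> \<nu> = topology_generated_by
     (insert (FV_space AP domT Tm \<omega> \<nu>)
       {{g \<in> FV_space AP domT Tm \<omega> \<nu>. fv_seminorm Tm \<omega> \<nu> j m (\<lambda>x. g x - f x) < \<epsilon>} | f j m \<epsilon>.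
           f \<in> FV_space AP domT Tm \<omega> \<nu> \<and> \<epsilon> > 0})"

definition FV_dual ::
  "('a \<Rightarrow> 'k::real_normed_field) set \<Rightarrow> ('m \<Rightarrow> ('a \<Rightarrow> 'k) set) \<Rightarrow> ('m \<Rightarrow> ('a \<Rightarrow> 'k) \<Rightarrow> ('w \<Rightarrow> 'k))
    \<Rightarrow> ('m \<Rightarrow> 'w set) \<Rightarrow> ('j \<Rightarrow> 'm \<Rightarrow> 'w \<Rightarrow> real) \<Rightarrow> (('a \<Rightarrow> 'k) \<Rightarrow> 'k) set" where
  "FV_dual AP domT Tm \<omega> \<nu> = {\<phi>. lin_functional_on (FV_space AP domT Tm \<omega> \<nu>) \<phi> \<and>
       continuous_map (FV_topology AP domT Tm \<omega> \<nu>) euclidean \<phi>}"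

definition FV_precompact ::
  "('a \<Rightarrow> 'k::real_normed_field) set \<Rightarrow> ('m \<Rightarrow> ('a \<Rightarrow> 'k) set) \<Rightarrow> ('m \<Rightarrow> ('a \<Rightarrow> 'k) \<Rightarrow> ('w \<Rightarrow> 'k))
    \<Rightarrow> ('m \<Rightarrow> 'w set) \<Rightarrow> ('j \<Rightarrow> 'm \<Rightarrow> 'w \<Rightarrow> real) \<Rightarrow> ('a \<Rightarrow> 'k) set \<Rightarrow> bool" where
  "FV_precompact AP domT Tm \<omega> \<nu> B \<longleftrightarrow> B \<subseteq> FV_space AP domT Tm \<omega> \<nu> \<and>
     (\<forall>U. openin (FV_topology AP domT Tm \<omega> \<nu>) U \<and> (\<lambda>x. 0) \<in> U \<longrightarrow>
        (\<exists>F. finite F \<and> F \<subseteq> FV_space AP domT Tm \<omega> \<nu> \<and>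
             B \<subseteq> {(\<lambda>x. g x + u x) | g u. g \<in> F \<and> u \<in> U}))"

definition FV_dual_gamma ::
  "('a \<Rightarrow> 'k::real_normed_field) set \<Rightarrow> ('m \<Rightarrow> ('a \<Rightarrow> 'k) set) \<Rightarrow> ('m \<Rightarrow> ('a \<Rightarrow> 'k) \<Rightarrow> ('w \<Rightarrow> 'k))
    \<Rightarrow> ('m \<Rightarrow> 'w set) \<Rightarrow> ('j \<Rightarrow> 'm \<Rightarrow> 'w \<Rightarrow> real) \<Rightarrow> (('a \<Rightarrow> 'k) \<Rightarrow> 'k) topology" where
  "FV_dual_gamma AP domT Tm \<omega> \<nu> = topology_generated_by
     (insert (FV_dual AP domT Tm \<omega> \<nu>)
       {{\<psi> \<in> FV_dual AP domT Tm \<omega> \<nu>. (SUP f\<in>B. norm (\<psi> f - \<phi> f)) < \<epsilon>} | \<phi> B \<epsilon>.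
           \<phi> \<in> FV_dual AP domT Tm \<omega> \<nu> \<and> FV_precompact AP domT Tm \<omega> \<nu> B \<and> \<epsilon> > 0})"

definition dom_space ::
  "'a topology \<Rightarrow> ('a \<Rightarrow> 'k::real_normed_field) set \<Rightarrow> ('m \<Rightarrow> ('a \<Rightarrow> 'k) set) \<Rightarrow> ('m \<Rightarrow> ('a \<Rightarrow> 'k) \<Rightarrow> ('w \<Rightarrow> 'k))
    \<Rightarrow> ('m \<Rightarrow> 'w set) \<Rightarrow> ('j \<Rightarrow> 'm \<Rightarrow> 'w \<Rightarrow> real) \<Rightarrow> bool" where
  "dom_space X AP domT Tm \<omega> \<nu> \<longleftrightarrow>
     Hausdorff_space (FV_topology AP domT Tm \<omega> \<nu>) \<and>
     (\<forall>j1 m1 j2 m2. \<exists>j m C. \<forall>f\<in>FV_space AP domT Tm \<omega> \<nu>.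
        max (fv_seminorm Tm \<omega> \<nu> j1 m1 f) (fv_seminorm Tm \<omega> \<nu> j2 m2 f) \<le> C * fv_seminorm Tm \<omega> \<nu> j m f) \<and>
     (\<forall>x\<in>topspace X. (\<lambda>f. f x) \<in> FV_dual AP domT Tm \<omega> \<nu>)"

definition FV_framework ::
  "('a \<Rightarrow> 'k::real_normed_field) set \<Rightarrow> ('m \<Rightarrow> ('a \<Rightarrow> 'k) set) \<Rightarrow> ('m \<Rightarrow> ('a \<Rightarrow> 'k) \<Rightarrow> ('w \<Rightarrow> 'k))
    \<Rightarrow> ('m \<Rightarrow> 'w set) \<Rightarrow> ('j \<Rightarrow> 'm \<Rightarrow> 'w \<Rightarrow> real) \<Rightarrow> bool" where
  "FV_framework AP domT Tm \<omega> \<nu> \<longleftrightarrow>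
     (\<forall>m. \<omega> m \<noteq> {}) \<and> (\<forall>j m x. \<nu> j m x \<ge> 0) \<and>
     (\<forall>m. \<forall>x\<in>\<omega> m. \<exists>j. \<nu> j m x > 0) \<and>
     lin_subspace AP \<and> (\<forall>m. lin_subspace (domT m)) \<and> (\<forall>m. lin_map_on (domT m) (Tm m))"

definition C_space :: "'a topology \<Rightarrow> ('a \<Rightarrow> 'k::real_normed_field) set" where
  "C_space X = {g. continuous_map X euclidean g}"

definition CW_topology :: "'a topology \<Rightarrow> ('a \<Rightarrow> 'k::real_normed_field) topology" where
  "CW_topology X = topology_generated_by
     (insert (C_space X)
       {{h \<in> C_space X. (SUP x\<in>K. norm (h x - g x)) < \<epsilon>} | g K \<epsilon>.
          g \<in> C_space X \<and> compactin X K \<and> \<epsilon> > 0})"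

definition Cb_space :: "'a topology \<Rightarrow> ('a \<Rightarrow> 'k::real_normed_field) set" where
  "Cb_space X = {g \<in> C_space X. bounded (g ` topspace X)}"

definition Cb_topology :: "'a topology \<Rightarrow> ('a \<Rightarrow> 'k::real_normed_field) topology" where
  "Cb_topology X = topology_generated_by
     (insert (Cb_space X)
       {{h \<in> Cb_space X. (SUP x\<in>topspace X. norm (h x - g x)) < \<epsilon>} | g \<epsilon>.
          g \<in> Cb_space X \<and> \<epsilon> > 0})"

definition kR_space :: "'a topology \<Rightarrow> bool" where
  "kR_space X \<longleftrightarrow> completely_regular_space X \<and>
     (\<forall>f::'a \<Rightarrow> real. (\<forall>K. compactin X K \<longrightarrow> continuous_map (subtopology X K) euclideanreal f)
        \<longrightarrow> continuous_map X euclideanreal f)"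

end

theory Submission
  imports Defs
begin

text \<open>The functional \<open>\<delta>\<^sub>x \<circ> T\<close> is \<open>T\<close> followed by evaluation at \<open>x\<close>, which is continuous both
  for uniform convergence on compacts and for uniform convergence on \<open>\<Omega>\<close>. For continuity
  into the \<open>\<gamma>\<close>-dual one has to show that \<open>x \<mapsto> sup\<^sub>f\<^sub>\<in>\<^sub>B |T f x - \<phi> f|\<close> is continuous for
  every precompact \<open>B\<close>. Continuity of \<open>T\<close> at \<open>0\<close> yields a zero neighbourhood \<open>U\<close> whose image
  is uniformly small on a set \<open>K\<close> (a compact set in case (i), all of \<open>\<Omega>\<close> in case (ii)), and
  \<open>B \<subseteq> F + U\<close> with \<open>F\<close> finite; hence \<open>T(B)\<close> is equicontinuous on \<open>K\<close>, and the supremum of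
  an equicontinuous, pointwise bounded family is continuous. In case (i) this gives
  continuity on every compact set, which suffices in a \<open>k\<^sub>\<real>\<close>-space.\<close>

lemma continuous_map_euclidean_iff_dist:
  fixes f :: "'a \<Rightarrow> 'b::metric_space"
  shows "continuous_map Y euclidean f \<longleftrightarrow>
    (\<forall>x\<in>topspace Y. \<forall>e>0. \<exists>U. openin Y U \<and> x \<in> U \<and> (\<forall>y\<in>U. dist (f y) (f x) < e))"
  by (simp add: Met_TC.continuous_map_to_metric dist_commute flip: mtopology_is_euclidean)

lemma SUP_abs_diff_le:
  fixes a b :: "'b \<Rightarrow> real"
  assumes "B \<noteq> {}" "bdd_above (a ` B)" "bdd_above (b ` B)" "\<And>f. f \<in> B \<Longrightarrow> \<bar>a f - b f\<bar> \<le> e"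
  shows "\<bar>(SUP f\<in>B. a f) - (SUP f\<in>B. b f)\<bar> \<le> e"
proof -
  have "(SUP f\<in>B. a f) \<le> (SUP f\<in>B. b f) + e"
  proof (rule cSUP_least[OF assms(1)])
    fix f assume "f \<in> B"
    then show "a f \<le> (SUP f\<in>B. b f) + e"
      using cSUP_upper[OF _ assms(3)] assms(4) by fastforce
  qed
  moreover have "(SUP f\<in>B. b f) \<le> (SUP f\<in>B. a f) + e"
  proof (rule cSUP_least[OF assms(1)])
    fix f assume "f \<in> B"
    then show "b f \<le> (SUP f\<in>B. a f) + e"
      using cSUP_upper[OF _ assms(2)] assms(4) by fastforce
  qed
  ultimately show ?thesis by linarith
qed

lemma bdd_above_norm_diff:
  fixes g h :: "'a \<Rightarrow> 'b::real_normed_vector"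
  assumes "bounded (g ` S)" "bounded (h ` S)"
  shows "bdd_above ((\<lambda>y. norm (g y - h y)) ` S)"
proof -
  obtain a b where "\<forall>y\<in>S. norm (g y) \<le> a" "\<forall>y\<in>S. norm (h y) \<le> b"
    using assms by (auto simp: bounded_iff)
  then have "norm (g y - h y) \<le> a + b" if "y \<in> S" for y
    using norm_triangle_ineq4[of "g y" "h y"] that by fastforce
  then show ?thesis by (intro bdd_aboveI2) blast
qed

definition equicontinuous_map :: "'a topology \<Rightarrow> ('a \<Rightarrow> 'b::metric_space) set \<Rightarrow> bool" where
  "equicontinuous_map Y H \<longleftrightarrow> (\<forall>x\<in>topspace Y. \<forall>e>0.
     \<exists>W. openin Y W \<and> x \<in> W \<and> (\<forall>y\<in>W. \<forall>h\<in>H. dist (h y) (h x) < e))"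

lemma continuous_map_SUP_equicontinuous:
  fixes H :: "('a \<Rightarrow> real) set"
  assumes "equicontinuous_map Y H" and "\<And>x. x \<in> topspace Y \<Longrightarrow> bdd_above ((\<lambda>h. h x) ` H)"
  shows "continuous_map Y euclideanreal (\<lambda>x. SUP h\<in>H. h x)"
proof (cases "H = {}")
  case False
  show ?thesis
    unfolding continuous_map_euclidean_iff_dist
  proof (intro ballI allI impI)
    fix x and e :: real
    assume x: "x \<in> topspace Y" and e: "e > 0"
    then obtain W where W: "openin Y W" "x \<in> W" "\<forall>y\<in>W. \<forall>h\<in>H. dist (h y) (h x) < e/2"
      using assms(1) unfolding equicontinuous_map_def by (meson half_gt_zero)
    have "dist (SUP h\<in>H. h y) (SUP h\<in>H. h x) < e" if y: "y \<in> W" for y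
    proof -
      have "y \<in> topspace Y" using W(1) y openin_subset by blast
      then have "\<bar>(SUP h\<in>H. h y) - (SUP h\<in>H. h x)\<bar> \<le> e/2"
        using W(3) y by (intro SUP_abs_diff_le False assms(2) x) (auto simp: dist_real_def intro!: less_imp_le)
      then show ?thesis using e by (simp add: dist_real_def)
    qed
    then show "\<exists>U. openin Y U \<and> x \<in> U \<and> (\<forall>y\<in>U. dist (SUP h\<in>H. h y) (SUP h\<in>H. h x) < e)"
      using W by blast
  qed
qed simp

definition finer_than_uniform_on :: "('a \<Rightarrow> 'b::metric_space) topology \<Rightarrow> 'a set \<Rightarrow> bool" where
  "finer_than_uniform_on Y K \<longleftrightarrow> (\<forall>h0\<in>topspace Y. \<forall>e>0.
     \<exists>V. openin Y V \<and> h0 \<in> V \<and> (\<forall>h\<in>V. \<forall>y\<in>K. dist (h y) (h0 y) < e))"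

text \<open>\<open>K \<noteq> {}\<close> in the first hypothesis because \<open>Sup {}\<close> is unspecified on the reals.\<close>

lemma finer_than_uniform_onI:
  fixes Y :: "('a \<Rightarrow> 'b::real_normed_vector) topology"
  assumes sup_ball: "\<And>h0 e. h0 \<in> topspace Y \<Longrightarrow> e > 0 \<Longrightarrow> K \<noteq> {} \<Longrightarrow>
      openin Y {h \<in> topspace Y. (SUP y\<in>K. norm (h y - h0 y)) < e}"
    and bounded: "\<And>h. h \<in> topspace Y \<Longrightarrow> bounded (h ` K)"
  shows "finer_than_uniform_on Y K"
  unfolding finer_than_uniform_on_def
proof (intro ballI allI impI)
  fix h0 and e :: real
  assume h0: "h0 \<in> topspace Y" and e: "e > 0"
  show "\<exists>V. openin Y V \<and> h0 \<in> V \<and> (\<forall>h\<in>V. \<forall>y\<in>K. dist (h y) (h0 y) < e)"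
  proof (cases "K = {}")
    case False
    let ?V = "{h \<in> topspace Y. (SUP y\<in>K. norm (h y - h0 y)) < e}"
    have "h0 \<in> ?V" using h0 e False by simp
    moreover have "dist (h y) (h0 y) < e" if "h \<in> ?V" "y \<in> K" for h y
    proof -
      have "norm (h y - h0 y) \<le> (SUP y\<in>K. norm (h y - h0 y))"
        using that bounded h0 by (intro cSUP_upper bdd_above_norm_diff) auto
      then show ?thesis using that by (simp add: dist_norm)
    qed
    ultimately show ?thesis using sup_ball[OF h0 e False] by blast
  qed (use h0 in auto)
qed

lemma CW_topspace: "topspace (CW_topology X) = C_space X"
  unfolding CW_topology_def by auto

lemma Cb_topspace: "topspace (Cb_topology X) = Cb_space X"
  unfolding Cb_topology_def by auto

lemma finer_than_uniform_on_CW: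
  assumes "compactin X K"
  shows "finer_than_uniform_on (CW_topology X :: ('a \<Rightarrow> 'k::real_normed_field) topology) K"
proof (rule finer_than_uniform_onI)
  fix h0 :: "'a \<Rightarrow> 'k" and e :: real
  assume "h0 \<in> topspace (CW_topology X)" "e > 0"
  then show "openin (CW_topology X) {h \<in> topspace (CW_topology X). (SUP y\<in>K. norm (h y - h0 y)) < e}"
    unfolding CW_topspace unfolding CW_topology_def
    by (intro topology_generated_by_Basis insertI2 CollectI exI[of _ h0] exI[of _ K] exI[of _ e])
      (use assms in auto)
next
  fix h :: "'a \<Rightarrow> 'k"
  assume "h \<in> topspace (CW_topology X)"
  then have "continuous_map X euclidean h" by (simp add: CW_topspace C_space_def)
  then have "compact (h ` K)" using image_compactin[OF assms, of euclidean h] by simp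
  then show "bounded (h ` K)" by (rule compact_imp_bounded)
qed

lemma finer_than_uniform_on_Cb:
  "finer_than_uniform_on (Cb_topology X :: ('a \<Rightarrow> 'k::real_normed_field) topology) (topspace X)"
proof (rule finer_than_uniform_onI)
  fix h0 :: "'a \<Rightarrow> 'k" and e :: real
  assume "h0 \<in> topspace (Cb_topology X)" "e > 0"
  then show "openin (Cb_topology X)
      {h \<in> topspace (Cb_topology X). (SUP y\<in>topspace X. norm (h y - h0 y)) < e}"
    unfolding Cb_topspace unfolding Cb_topology_def
    by (intro topology_generated_by_Basis insertI2 CollectI exI[of _ h0] exI[of _ e]) auto
qed (simp add: Cb_topspace Cb_space_def)

lemma continuous_map_eval_finer_than_uniform_on:
  assumes "finer_than_uniform_on Y K" "x \<in> K"
  shows "continuous_map Y euclidean (\<lambda>h. h x)"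
  unfolding continuous_map_euclidean_iff_dist
proof (intro ballI allI impI)
  fix h0 and e :: real
  assume "h0 \<in> topspace Y" "e > 0"
  then obtain V where "openin Y V" "h0 \<in> V" "\<forall>h\<in>V. \<forall>y\<in>K. dist (h y) (h0 y) < e"
    using assms(1) unfolding finer_than_uniform_on_def by meson
  then show "\<exists>U. openin Y U \<and> h0 \<in> U \<and> (\<forall>h\<in>U. dist (h x) (h0 x) < e)"
    using assms(2) by blast
qed

lemma FV_topspace: "topspace (FV_topology AP domT Tm \<omega> \<nu>) = FV_space AP domT Tm \<omega> \<nu>"
  unfolding FV_topology_def by auto

lemma FV_space_zero:
  assumes "FV_framework AP domT Tm \<omega> \<nu>"
  shows "(\<lambda>x. 0) \<in> FV_space AP domT Tm \<omega> \<nu>"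
proof -
  have "Tm m (\<lambda>x. 0) = (\<lambda>y. 0)" for m
  proof -
    have "(\<lambda>x. 0) \<in> domT m" "\<forall>c. \<forall>f\<in>domT m. Tm m (\<lambda>x. c * f x) = (\<lambda>y. c * Tm m f y)"
      using assms by (auto simp: FV_framework_def lin_subspace_def lin_map_on_def)
    from this(2)[rule_format, where c=0 and f="\<lambda>x. 0"] this(1) show ?thesis by simp
  qed
  then show ?thesis
    using assms by (auto simp: FV_framework_def FV_space_def lin_subspace_def)
qed

lemma lin_map_into_on_zero:
  assumes "lin_map_into_on D S T" "(\<lambda>x. 0) \<in> D" "y \<in> S"
  shows "T (\<lambda>x. 0) y = 0"
proof -
  have "T (\<lambda>x. 0 * 0) y = 0 * T (\<lambda>x. 0) y"
    using assms unfolding lin_map_into_on_def by fast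
  then show ?thesis by simp
qed

lemma lin_map_into_on_add:
  assumes "lin_map_into_on D S T" "f \<in> D" "g \<in> D" "y \<in> S"
  shows "T (\<lambda>x. f x + g x) y = T f y + T g y"
  using assms unfolding lin_map_into_on_def by blast

lemma FV_dual_diff:
  assumes "\<psi> \<in> FV_dual AP domT Tm \<omega> \<nu>" "\<phi> \<in> FV_dual AP domT Tm \<omega> \<nu>"
  shows "(\<lambda>f. \<psi> f - \<phi> f) \<in> FV_dual AP domT Tm \<omega> \<nu>"
  using assms unfolding FV_dual_def lin_functional_on_def
  by (auto simp: right_diff_distrib intro: continuous_map_diff)

lemma FV_precompact_bounded:
  assumes fr: "FV_framework AP domT Tm \<omega> \<nu>"
    and \<psi>: "\<psi> \<in> FV_dual AP domT Tm \<omega> \<nu>"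
    and pc: "FV_precompact AP domT Tm \<omega> \<nu> B"
  shows "bdd_above ((\<lambda>f. norm (\<psi> f)) ` B)"
proof -
  let ?S = "FV_space AP domT Tm \<omega> \<nu>"
  let ?U = "{f \<in> topspace (FV_topology AP domT Tm \<omega> \<nu>). \<psi> f \<in> ball 0 1}"
  have lin: "lin_functional_on ?S \<psi>"
    and cont: "continuous_map (FV_topology AP domT Tm \<omega> \<nu>) euclidean \<psi>"
    using \<psi> by (auto simp: FV_dual_def)
  have z: "(\<lambda>x. 0) \<in> ?S" by (rule FV_space_zero[OF fr])
  moreover have "\<psi> (\<lambda>x. 0 * 0) = 0 * \<psi> (\<lambda>x. 0)"
    using lin z unfolding lin_functional_on_def by fast
  ultimately have "(\<lambda>x. 0) \<in> ?U" by (simp add: FV_topspace)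
  moreover have "openin (FV_topology AP domT Tm \<omega> \<nu>) ?U"
    by (rule openin_continuous_map_preimage[OF cont]) auto
  ultimately obtain F where F: "finite F" "F \<subseteq> ?S"
    "B \<subseteq> {(\<lambda>x. g x + u x) | g u. g \<in> F \<and> u \<in> ?U}"
    using pc unfolding FV_precompact_def by blast
  have "norm (\<psi> f) \<le> (\<Sum>g\<in>F. norm (\<psi> g)) + 1" if "f \<in> B" for f
  proof -
    obtain g u where gu: "f = (\<lambda>x. g x + u x)" "g \<in> F" "u \<in> ?U" using F(3) \<open>f \<in> B\<close> by blast
    then have "\<psi> f = \<psi> g + \<psi> u"
      using lin F(2) unfolding lin_functional_on_def FV_topspace by blast
    then have "norm (\<psi> f) \<le> norm (\<psi> g) + norm (\<psi> u)" by (simp add: norm_triangle_ineq)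
    also have "\<dots> \<le> (\<Sum>g\<in>F. norm (\<psi> g)) + 1"
      using gu member_le_sum[of g F "\<lambda>g. norm (\<psi> g)"] F(1) by (auto simp: dist_norm)
    finally show ?thesis .
  qed
  then show ?thesis by (intro bdd_aboveI2) blast
qed

lemma eval_comp_in_FV_dual:
  assumes "lin_map_into_on (FV_space AP domT Tm \<omega> \<nu>) (topspace X) T"
    and "continuous_map (FV_topology AP domT Tm \<omega> \<nu>) Y T"
    and "finer_than_uniform_on Y K" "x \<in> K" "x \<in> topspace X"
  shows "(\<lambda>f. T f x) \<in> FV_dual AP domT Tm \<omega> \<nu>"
proof -
  have "continuous_map (FV_topology AP domT Tm \<omega> \<nu>) euclidean ((\<lambda>h. h x) \<circ> T)"
    using assms(2) continuous_map_eval_finer_than_uniform_on[OF assms(3,4)]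
    by (rule continuous_map_compose)
  then show ?thesis
    using assms(1,5) unfolding FV_dual_def lin_map_into_on_def lin_functional_on_def o_def
    by blast
qed

lemma zero_nbhd_uniformly_small:
  assumes fr: "FV_framework AP domT Tm \<omega> \<nu>"
    and lin: "lin_map_into_on (FV_space AP domT Tm \<omega> \<nu>) (topspace X) T"
    and T: "continuous_map (FV_topology AP domT Tm \<omega> \<nu>) Y T"
    and Y: "finer_than_uniform_on Y K" and K: "K \<subseteq> topspace X"
    and \<eta>: "\<eta> > 0"
  shows "\<exists>U. openin (FV_topology AP domT Tm \<omega> \<nu>) U \<and> (\<lambda>x. 0) \<in> U \<and>
           (\<forall>u\<in>U. \<forall>y\<in>K. norm (T u y) < \<eta>)"
proof -
  have z: "(\<lambda>x. 0) \<in> topspace (FV_topology AP domT Tm \<omega> \<nu>)"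
    using FV_space_zero[OF fr] by (simp add: FV_topspace)
  then have "T (\<lambda>x. 0) \<in> topspace Y"
    using continuous_map_image_subset_topspace[OF T] by blast
  then obtain V where V: "openin Y V" "T (\<lambda>x. 0) \<in> V"
    "\<forall>h\<in>V. \<forall>y\<in>K. dist (h y) (T (\<lambda>x. 0) y) < \<eta>"
    using Y \<eta> unfolding finer_than_uniform_on_def by meson
  let ?U = "{f \<in> topspace (FV_topology AP domT Tm \<omega> \<nu>). T f \<in> V}"
  have "T (\<lambda>x. 0) y = 0" if "y \<in> K" for y
    using lin_map_into_on_zero[OF lin] z K that by (auto simp: FV_topspace)
  then have "\<forall>u\<in>?U. \<forall>y\<in>K. norm (T u y) < \<eta>"
    using V(3) by (simp add: dist_norm)
  moreover have "openin (FV_topology AP domT Tm \<omega> \<nu>) ?U"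
    by (rule openin_continuous_map_preimage[OF T V(1)])
  moreover have "(\<lambda>x. 0) \<in> ?U" using z V(2) by simp
  ultimately show ?thesis by blast
qed

lemma equicontinuous_map_finite:
  fixes H :: "('a \<Rightarrow> 'b::metric_space) set"
  assumes "finite H" "\<And>h. h \<in> H \<Longrightarrow> continuous_map Y euclidean h"
  shows "equicontinuous_map Y H"
  unfolding equicontinuous_map_def
proof (intro ballI allI impI)
  fix x and e :: real
  assume x: "x \<in> topspace Y" and e: "e > 0"
  have "\<forall>h\<in>H. \<exists>V. openin Y V \<and> x \<in> V \<and> (\<forall>y\<in>V. dist (h y) (h x) < e)"
    using assms(2) x e unfolding continuous_map_euclidean_iff_dist by blast
  from bchoice[OF this] obtain V where V: "\<forall>h\<in>H. openin Y (V h) \<and> x \<in> V h \<and>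
      (\<forall>y\<in>V h. dist (h y) (h x) < e)" by blast
  have "openin Y ((\<Inter>h\<in>H. V h) \<inter> topspace Y)"
    by (rule openin_INT[OF assms(1)]) (use V in blast)
  moreover have "x \<in> (\<Inter>h\<in>H. V h) \<inter> topspace Y" using V x by auto
  moreover have "\<forall>y\<in>(\<Inter>h\<in>H. V h) \<inter> topspace Y. \<forall>h\<in>H. dist (h y) (h x) < e" using V by blast
  ultimately show "\<exists>W. openin Y W \<and> x \<in> W \<and> (\<forall>y\<in>W. \<forall>h\<in>H. dist (h y) (h x) < e)"
    by blast
qed

lemma lin_map_into_on_dist_add_le:
  fixes T :: "('a \<Rightarrow> 'k::real_normed_field) \<Rightarrow> ('b \<Rightarrow> 'k)"
  assumes "lin_map_into_on D S T" "g \<in> D" "u \<in> D" "y \<in> S" "x \<in> S"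
  shows "dist (T (\<lambda>z. g z + u z) y) (T (\<lambda>z. g z + u z) x) \<le> dist (T g y) (T g x) + norm (T u y) + norm (T u x)"
proof -
  have "T (\<lambda>z. g z + u z) y - T (\<lambda>z. g z + u z) x = (T g y - T g x) + (T u y - T u x)"
    using lin_map_into_on_add[OF assms(1-3)] assms(4,5) by (simp add: algebra_simps)
  then have "dist (T (\<lambda>z. g z + u z) y) (T (\<lambda>z. g z + u z) x) \<le> norm (T g y - T g x) + norm (T u y - T u x)"
    by (simp add: dist_norm norm_triangle_ineq)
  also have "\<dots> \<le> dist (T g y) (T g x) + norm (T u y) + norm (T u x)"
    using norm_triangle_ineq4[of "T u y" "T u x"] by (simp add: dist_norm)
  finally show ?thesis .
qed

lemma equicontinuous_image_FV_precompact:
  fixes T :: "('a \<Rightarrow> 'k::real_normed_field) \<Rightarrow> ('a \<Rightarrow> 'k)"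
  assumes lin: "lin_map_into_on (FV_space AP domT Tm \<omega> \<nu>) (topspace X) T"
    and cont: "\<And>f. f \<in> FV_space AP domT Tm \<omega> \<nu> \<Longrightarrow> continuous_map X euclidean (T f)"
    and K: "K \<subseteq> topspace X"
    and small: "\<And>\<eta>. \<eta> > 0 \<Longrightarrow> \<exists>U. openin (FV_topology AP domT Tm \<omega> \<nu>) U \<and> (\<lambda>x. 0) \<in> U \<and>
                   (\<forall>u\<in>U. \<forall>y\<in>K. norm (T u y) < \<eta>)"
    and pc: "FV_precompact AP domT Tm \<omega> \<nu> B"
  shows "equicontinuous_map (subtopology X K) (T ` B)"
  unfolding equicontinuous_map_def
proof (intro ballI allI impI)
  fix x0 and e :: real
  assume x0: "x0 \<in> topspace (subtopology X K)" and e: "e > 0"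
  then have x0K: "x0 \<in> K" using K by simp
  obtain U where U: "openin (FV_topology AP domT Tm \<omega> \<nu>) U" "(\<lambda>x. 0) \<in> U"
    "\<forall>u\<in>U. \<forall>y\<in>K. norm (T u y) < e/3"
    using small[of "e/3"] e by auto
  obtain F where F: "finite F" "F \<subseteq> FV_space AP domT Tm \<omega> \<nu>"
    "B \<subseteq> {(\<lambda>x. g x + u x) | g u. g \<in> F \<and> u \<in> U}"
    using pc U unfolding FV_precompact_def by blast
  have "equicontinuous_map (subtopology X K) (T ` F)"
    using F(1,2) cont by (intro equicontinuous_map_finite continuous_map_from_subtopology) auto
  then obtain W where W: "openin (subtopology X K) W" "x0 \<in> W"
    "\<forall>y\<in>W. \<forall>g\<in>F. dist (T g y) (T g x0) < e/3"
    using x0 e unfolding equicontinuous_map_def by (metis (no_types, lifting) image_eqI divide_pos_pos zero_less_numeral)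
  have "dist (T f y) (T f x0) < e" if "y \<in> W" "f \<in> B" for y f
  proof -
    obtain g u where gu: "f = (\<lambda>x. g x + u x)" "g \<in> F" "u \<in> U" using F(3) \<open>f \<in> B\<close> by blast
    have yK: "y \<in> K" using W(1) \<open>y \<in> W\<close> openin_subset by fastforce
    have "u \<in> FV_space AP domT Tm \<omega> \<nu>" using gu(3) openin_subset[OF U(1)] by (auto simp: FV_topspace)
    then have "dist (T f y) (T f x0) \<le> dist (T g y) (T g x0) + norm (T u y) + norm (T u x0)"
      unfolding gu(1) using lin_map_into_on_dist_add_le[OF lin] F(2) gu(2) yK x0K K by blast
    also have "\<dots> < e"
    proof -
      have "dist (T g y) (T g x0) < e/3" using W(3) gu(2) \<open>y \<in> W\<close> by blast
      moreover have "norm (T u y) < e/3" "norm (T u x0) < e/3" using U(3) gu(3) yK x0K by auto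
      ultimately show ?thesis by linarith
    qed
    finally show ?thesis .
  qed
  then show "\<exists>W. openin (subtopology X K) W \<and> x0 \<in> W \<and>
      (\<forall>y\<in>W. \<forall>h\<in>T ` B. dist (h y) (h x0) < e)"
    using W(1,2) by blast
qed

lemma equicontinuous_map_norm_diff:
  fixes T :: "'b \<Rightarrow> 'a \<Rightarrow> 'c::real_normed_vector"
  assumes "equicontinuous_map Y (T ` B)"
  shows "equicontinuous_map Y ((\<lambda>f x. norm (T f x - c f)) ` B)"
  unfolding equicontinuous_map_def
proof (intro ballI allI impI)
  fix x and e :: real
  assume "x \<in> topspace Y" "e > 0"
  then obtain W where W: "openin Y W" "x \<in> W" "\<forall>y\<in>W. \<forall>f\<in>B. dist (T f y) (T f x) < e"
    using assms unfolding equicontinuous_map_def by (metis (no_types, lifting) image_eqI)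
  have "dist (norm (T f y - c f)) (norm (T f x - c f)) < e" if "y \<in> W" "f \<in> B" for y f
  proof -
    have "dist (norm (T f y - c f)) (norm (T f x - c f)) \<le> dist (T f y) (T f x)"
      using norm_triangle_ineq3[of "T f y - c f" "T f x - c f"] by (simp add: dist_real_def dist_norm)
    then show ?thesis using W(3) that by fastforce
  qed
  then show "\<exists>W. openin Y W \<and> x \<in> W \<and>
      (\<forall>y\<in>W. \<forall>h\<in>(\<lambda>f x. norm (T f x - c f)) ` B. dist (h y) (h x) < e)"
    using W(1,2) by blast
qed

lemma continuous_map_SUP_norm_diff_FV_dual:
  fixes T :: "('a \<Rightarrow> 'k::real_normed_field) \<Rightarrow> ('a \<Rightarrow> 'k)"
  assumes fr: "FV_framework AP domT Tm \<omega> \<nu>"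
    and lin: "lin_map_into_on (FV_space AP domT Tm \<omega> \<nu>) (topspace X) T"
    and cont: "\<And>f. f \<in> FV_space AP domT Tm \<omega> \<nu> \<Longrightarrow> continuous_map X euclidean (T f)"
    and T: "continuous_map (FV_topology AP domT Tm \<omega> \<nu>) Y T"
    and Y: "finer_than_uniform_on Y K" and K: "K \<subseteq> topspace X"
    and eval: "\<And>x. x \<in> K \<Longrightarrow> (\<lambda>f. T f x) \<in> FV_dual AP domT Tm \<omega> \<nu>"
    and \<phi>: "\<phi> \<in> FV_dual AP domT Tm \<omega> \<nu>"
    and pc: "FV_precompact AP domT Tm \<omega> \<nu> B"
  shows "continuous_map (subtopology X K) euclideanreal (\<lambda>x. SUP f\<in>B. norm (T f x - \<phi> f))"
proof -
  define H where "H = (\<lambda>f x. norm (T f x - \<phi> f)) ` B"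
  have "equicontinuous_map (subtopology X K) (T ` B)"
    using zero_nbhd_uniformly_small[OF fr lin T Y K]
    by (intro equicontinuous_image_FV_precompact[OF lin cont K _ pc])
  then have "equicontinuous_map (subtopology X K) H"
    unfolding H_def by (rule equicontinuous_map_norm_diff)
  moreover have "bdd_above ((\<lambda>h. h x) ` H)" if "x \<in> topspace (subtopology X K)" for x
    using FV_precompact_bounded[OF fr FV_dual_diff[OF eval \<phi>] pc] that K
    by (simp add: H_def image_image)
  ultimately have "continuous_map (subtopology X K) euclideanreal (\<lambda>x. SUP h\<in>H. h x)"
    by (rule continuous_map_SUP_equicontinuous)
  then show ?thesis by (simp add: H_def image_image)
qed

lemma continuous_map_into_FV_dual_gamma:
  assumes dual: "\<And>x. x \<in> topspace X \<Longrightarrow> \<Phi> x \<in> FV_dual AP domT Tm \<omega> \<nu>"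
    and sup: "\<And>\<phi> B. \<phi> \<in> FV_dual AP domT Tm \<omega> \<nu> \<Longrightarrow> FV_precompact AP domT Tm \<omega> \<nu> B \<Longrightarrow>
      continuous_map X euclideanreal (\<lambda>x. SUP f\<in>B. norm (\<Phi> x f - \<phi> f))"
  shows "continuous_map X (FV_dual_gamma AP domT Tm \<omega> \<nu>) \<Phi>"
  unfolding FV_dual_gamma_def
proof (rule continuous_on_generated_topo)
  fix U
  assume "U \<in> insert (FV_dual AP domT Tm \<omega> \<nu>)
     {{\<psi> \<in> FV_dual AP domT Tm \<omega> \<nu>. (SUP f\<in>B. norm (\<psi> f - \<phi> f)) < \<epsilon>} | \<phi> B \<epsilon>.
        \<phi> \<in> FV_dual AP domT Tm \<omega> \<nu> \<and> FV_precompact AP domT Tm \<omega> \<nu> B \<and> \<epsilon> > 0}"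
  then consider "U = FV_dual AP domT Tm \<omega> \<nu>"
    | \<phi> B \<epsilon> where "U = {\<psi> \<in> FV_dual AP domT Tm \<omega> \<nu>. (SUP f\<in>B. norm (\<psi> f - \<phi> f)) < \<epsilon>}"
        "\<phi> \<in> FV_dual AP domT Tm \<omega> \<nu>" "FV_precompact AP domT Tm \<omega> \<nu> B"
    by blast
  then show "openin X (\<Phi> -` U \<inter> topspace X)"
  proof cases
    case 1
    then show ?thesis using dual by (simp add: Int_absorb1 subsetI)
  next
    case 2
    then have "\<Phi> -` U \<inter> topspace X = {x \<in> topspace X. (SUP f\<in>B. norm (\<Phi> x f - \<phi> f)) \<in> {..<\<epsilon>}}"
      using dual by auto
    then show ?thesis using openin_continuous_map_preimage[OF sup[OF 2(2,3)], of "{..<\<epsilon>}"] by simp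
  qed
qed (use dual in auto)

lemma continuous_map_FV_dual_gamma_of_CW:
  fixes T :: "('a \<Rightarrow> 'k::real_normed_field) \<Rightarrow> ('a \<Rightarrow> 'k)"
  assumes fr: "FV_framework AP domT Tm \<omega> \<nu>"
    and lin: "lin_map_into_on (FV_space AP domT Tm \<omega> \<nu>) (topspace X) T"
    and C: "\<forall>f\<in>FV_space AP domT Tm \<omega> \<nu>. T f \<in> C_space X"
    and kR: "kR_space X"
    and T: "continuous_map (FV_topology AP domT Tm \<omega> \<nu>) (CW_topology X) T"
  shows "(\<forall>x\<in>topspace X. (\<lambda>f. T f x) \<in> FV_dual AP domT Tm \<omega> \<nu>) \<and>
         continuous_map X (FV_dual_gamma AP domT Tm \<omega> \<nu>) (\<lambda>x f. T f x)"
proof -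
  have cont: "continuous_map X euclidean (T f)" if "f \<in> FV_space AP domT Tm \<omega> \<nu>" for f
    using C that by (simp add: C_space_def)
  have dual: "(\<lambda>f. T f x) \<in> FV_dual AP domT Tm \<omega> \<nu>" if "x \<in> topspace X" for x
    using eval_comp_in_FV_dual[OF lin T finer_than_uniform_on_CW[of X "{x}"]] that by simp
  have on_compacts: "continuous_map (subtopology X K) euclideanreal (\<lambda>x. SUP f\<in>B. norm (T f x - \<phi> f))"
    if "\<phi> \<in> FV_dual AP domT Tm \<omega> \<nu>" "FV_precompact AP domT Tm \<omega> \<nu> B" "compactin X K" for \<phi> B K
  proof (rule continuous_map_SUP_norm_diff_FV_dual[OF fr lin cont T finer_than_uniform_on_CW[OF that(3)]
        compactin_subset_topspace[OF that(3)] _ that(1,2)])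
    show "(\<lambda>f. T f x) \<in> FV_dual AP domT Tm \<omega> \<nu>" if "x \<in> K" for x
      using dual compactin_subset_topspace[OF \<open>compactin X K\<close>] that by blast
  qed
  have sup: "continuous_map X euclideanreal (\<lambda>x. SUP f\<in>B. norm (T f x - \<phi> f))"
    if "\<phi> \<in> FV_dual AP domT Tm \<omega> \<nu>" "FV_precompact AP domT Tm \<omega> \<nu> B" for \<phi> B
    using kR[unfolded kR_space_def, THEN conjunct2, rule_format, OF on_compacts[OF that]] .
  show ?thesis using dual continuous_map_into_FV_dual_gamma[OF dual sup] by blast
qed

lemma continuous_map_FV_dual_gamma_of_Cb:
  fixes T :: "('a \<Rightarrow> 'k::real_normed_field) \<Rightarrow> ('a \<Rightarrow> 'k)"
  assumes fr: "FV_framework AP domT Tm \<omega> \<nu>"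
    and lin: "lin_map_into_on (FV_space AP domT Tm \<omega> \<nu>) (topspace X) T"
    and C: "\<forall>f\<in>FV_space AP domT Tm \<omega> \<nu>. T f \<in> C_space X"
    and T: "continuous_map (FV_topology AP domT Tm \<omega> \<nu>) (Cb_topology X) T"
  shows "(\<forall>x\<in>topspace X. (\<lambda>f. T f x) \<in> FV_dual AP domT Tm \<omega> \<nu>) \<and>
         continuous_map X (FV_dual_gamma AP domT Tm \<omega> \<nu>) (\<lambda>x f. T f x)"
proof -
  have cont: "continuous_map X euclidean (T f)" if "f \<in> FV_space AP domT Tm \<omega> \<nu>" for f
    using C that by (simp add: C_space_def)
  have dual: "(\<lambda>f. T f x) \<in> FV_dual AP domT Tm \<omega> \<nu>" if "x \<in> topspace X" for x
    using eval_comp_in_FV_dual[OF lin T finer_than_uniform_on_Cb that that] .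
  have sup: "continuous_map X euclideanreal (\<lambda>x. SUP f\<in>B. norm (T f x - \<phi> f))"
    if "\<phi> \<in> FV_dual AP domT Tm \<omega> \<nu>" "FV_precompact AP domT Tm \<omega> \<nu> B" for \<phi> B
    using continuous_map_SUP_norm_diff_FV_dual[OF fr lin cont T finer_than_uniform_on_Cb
        subset_refl dual that] by simp
  show ?thesis using dual continuous_map_into_FV_dual_gamma[OF dual sup] by blast
qed

theorem lemma4p2:
  fixes X :: "'a topology"
    and AP :: "('a \<Rightarrow> 'k::real_normed_field) set"
    and domT :: "'m \<Rightarrow> ('a \<Rightarrow> 'k) set"
    and Tm :: "'m \<Rightarrow> ('a \<Rightarrow> 'k) \<Rightarrow> ('w \<Rightarrow> 'k)"
    and \<omega> :: "'m \<Rightarrow> 'w set"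
    and \<nu> :: "'j \<Rightarrow> 'm \<Rightarrow> 'w \<Rightarrow> real"
    and T :: "('a \<Rightarrow> 'k) \<Rightarrow> ('a \<Rightarrow> 'k)"
  assumes "Hausdorff_space X"
    and "FV_framework AP domT Tm \<omega> \<nu>"
    and "dom_space X AP domT Tm \<omega> \<nu>"
    and "lin_map_into_on (FV_space AP domT Tm \<omega> \<nu>) (topspace X) T"
    and "\<forall>f\<in>FV_space AP domT Tm \<omega> \<nu>. T f \<in> C_space X"
    and "(kR_space X \<and> continuous_map (FV_topology AP domT Tm \<omega> \<nu>) (CW_topology X) T)
       \<or> ((\<forall>f\<in>FV_space AP domT Tm \<omega> \<nu>. T f \<in> Cb_space X) \<and>
          continuous_map (FV_topology AP domT Tm \<omega> \<nu>) (Cb_topology X) T)"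
  shows "(\<forall>x\<in>topspace X. (\<lambda>f. T f x) \<in> FV_dual AP domT Tm \<omega> \<nu>) \<and>
         continuous_map X (FV_dual_gamma AP domT Tm \<omega> \<nu>) (\<lambda>x f. T f x)"
  using assms(6)
proof (elim disjE conjE)
  assume "kR_space X" "continuous_map (FV_topology AP domT Tm \<omega> \<nu>) (CW_topology X) T"
  then show ?thesis by (rule continuous_map_FV_dual_gamma_of_CW[OF assms(2,4,5)])
next
  assume "continuous_map (FV_topology AP domT Tm \<omega> \<nu>) (Cb_topology X) T"
  then show ?thesis by (rule continuous_map_FV_dual_gamma_of_Cb[OF assms(2,4,5)])
qed

end
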